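(* Let $n\ge 4$ and let $D_n$ be the tree on vertex set $\{1,\ldots,n\}$ with edges $\{1,3\}$, $\{2,3\}$ and $\{i,i+1\}$ for $3\le i\le n-1$, with adjacency matrix $A$; let $W(D_n)=[e,Ae,\ldots,A^{n-1}e]$ with $e$ the all-ones vector of length $n$, and let $\hat W(D_n)$ be obtained from $W(D_n)$ by deleting the first row and the last column. Then $W(D_n)$ and the $n\times n$ matrix $\begin{pmatrix}0&0\\ \hat W(D_n)&0\end{pmatrix}$ (first row zero, last column zero) have the same Smith normal form. In particular $\operatorname{rank}W(D_n)=\operatorname{rank}\hat W(D_n)$.
   Context: The Smith normal form of an integral square matrix $M$ is the diagonal matrix $\operatorname{diag}[d_1,\ldots,d_n]$ with nonnegative integers $d_i$, $d_i\mid d_{i+1}$, such that $UMV=\operatorname{diag}[d_1,\ldots,d_n]$ for some unimodular integer matrices $U,V$. *)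

theory Defs
  imports "Jordan_Normal_Form.DL_Rank"
begin

definition is_smith_normal_form_of :: "nat \<Rightarrow> int mat \<Rightarrow> int mat \<Rightarrow> bool" where
  "is_smith_normal_form_of n M D \<longleftrightarrow>
     D \<in> carrier_mat n n \<and> diagonal_mat D \<and>
     (\<forall>i<n. D $$ (i,i) \<ge> 0) \<and>
     (\<forall>i. i + 1 < n \<longrightarrow> D $$ (i,i) dvd D $$ (i+1,i+1)) \<and>
     (\<exists>U V. U \<in> carrier_mat n n \<and> V \<in> carrier_mat n n \<and>
            invertible_mat U \<and> invertible_mat V \<and> U * M * V = D)"

definition Dn_edge :: "nat \<Rightarrow> nat \<Rightarrow> nat \<Rightarrow> bool" where
  "Dn_edge n u v \<longleftrightarrow>
     {u, v} = {1, 3} \<or> {u, v} = {2, 3} \<or> (\<exists>i. 3 \<le> i \<and> i \<le> n - 1 \<and> {u, v} = {i, i + 1})"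

text \<open>Adjacency matrix (0-based index k corresponds to vertex k+1).\<close>
definition Dn_adj :: "nat \<Rightarrow> int mat" where
  "Dn_adj n = mat n n (\<lambda>(i,j). if Dn_edge n (i+1) (j+1) then 1 else 0)"

definition walk_mat :: "nat \<Rightarrow> int mat \<Rightarrow> int mat" where
  "walk_mat n A = mat n n (\<lambda>(i,j). ((A ^\<^sub>m j) *\<^sub>v vec n (\<lambda>_. 1)) $ i)"

definition walk_hat :: "nat \<Rightarrow> int mat \<Rightarrow> int mat" where
  "walk_hat n W = mat (n - 1) (n - 1) (\<lambda>(i,j). W $$ (i + 1, j))"

definition pad_hat :: "nat \<Rightarrow> int mat \<Rightarrow> int mat" where
  "pad_hat n H = mat n n (\<lambda>(i,j). if i = 0 \<or> j = n - 1 then 0 else H $$ (i - 1, j))"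

end

theory Submission
  imports Defs
begin

(*
  Vertices 1 and 2 of D_n are twin leaves, so rows 1 and 2 of W agree and one row operation
  clears the first row. The lattice L = {x. x_1 = x_2} contains the image of A and has the
  unitriangular basis A^k e_n (k < n - 1). Expanding A^(n-1) e_n in this basis gives a monic
  integral relation of degree n - 1; since e lies in L and powers of A commute, e satisfies the
  same relation, i.e. the last column of W is an integral combination of the others, and one
  column operation clears it. So W is equivalent over Z to [[0,0],[What,0]], and a Smith normal
  form of the latter, which exists by Euclidean pivoting, is one of W. Over Q, deleting the first
  coordinate maps the column space of W bijectively onto that of What.
*)

section \<open>Equivalence of square matrices\<close>

lemma invertible_mat_iff_det_dvd_one:
  fixes A :: "('a :: comm_ring_1) mat"
  assumes A: "A \<in> carrier_mat n n"
  shows "invertible_mat A \<longleftrightarrow> det A dvd 1"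
proof
  assume "invertible_mat A"
  then obtain B where AB: "A * B = 1\<^sub>m n" and BA: "B * A = 1\<^sub>m (dim_row B)"
    using A unfolding invertible_mat_def inverts_mat_def by auto
  have B: "B \<in> carrier_mat n n"
    using A arg_cong[OF AB, of dim_col] arg_cong[OF BA, of dim_col] by auto
  have "det A * det B = 1" using det_mult[OF A B] AB by simp
  then show "det A dvd 1" by (metis dvd_triv_left)
next
  assume "det A dvd 1"
  then obtain u where u: "det A * u = 1" by (metis dvdE)
  let ?B = "u \<cdot>\<^sub>m adj_mat A"
  have B: "?B \<in> carrier_mat n n" using adj_mat(1)[OF A] by simp
  have scale: "u \<cdot>\<^sub>m (det A \<cdot>\<^sub>m 1\<^sub>m n) = 1\<^sub>m n"
    by (rule eq_matI) (use u in \<open>auto simp: mult.commute\<close>)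
  have "A * ?B = 1\<^sub>m n"
    using adj_mat[OF A] A scale by (simp add: mult_smult_distrib)
  moreover have "?B * A = 1\<^sub>m n"
    using adj_mat[OF A] A scale by (simp add: mult_smult_assoc_mat)
  ultimately show "invertible_mat A"
    using A B unfolding invertible_mat_def inverts_mat_def by auto
qed

definition equivalent_mat :: "nat \<Rightarrow> ('a :: comm_ring_1) mat \<Rightarrow> 'a mat \<Rightarrow> bool" where
  "equivalent_mat n A B \<longleftrightarrow> A \<in> carrier_mat n n \<and>
     (\<exists>P Q. P \<in> carrier_mat n n \<and> Q \<in> carrier_mat n n \<and> det P dvd 1 \<and> det Q dvd 1 \<and> P * A * Q = B)"

lemma equivalent_mat_carrier: "equivalent_mat n A B \<Longrightarrow> B \<in> carrier_mat n n"
  unfolding equivalent_mat_def by auto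

lemma equivalent_mat_refl: "A \<in> carrier_mat n n \<Longrightarrow> equivalent_mat n A A"
  unfolding equivalent_mat_def by (intro conjI exI[of _ "1\<^sub>m n"]) auto

lemma equivalent_mat_trans:
  assumes "equivalent_mat n A B" and "equivalent_mat n B C"
  shows "equivalent_mat n A C"
proof -
  obtain P Q where A: "A \<in> carrier_mat n n" and P: "P \<in> carrier_mat n n" "det P dvd 1"
    and Q: "Q \<in> carrier_mat n n" "det Q dvd 1" and B: "P * A * Q = B"
    using assms(1) unfolding equivalent_mat_def by blast
  obtain P' Q' where P': "P' \<in> carrier_mat n n" "det P' dvd 1"
    and Q': "Q' \<in> carrier_mat n n" "det Q' dvd 1" and C: "P' * B * Q' = C"
    using assms(2) unfolding equivalent_mat_def by blast
  have "(P' * P) * A * (Q * Q') = C"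
    unfolding C[symmetric] B[symmetric]
    using A P(1) Q(1) P'(1) Q'(1) by (simp add: assoc_mult_mat[of _ n n _ n _ n])
  moreover have "det (P' * P) dvd 1" "det (Q * Q') dvd 1"
    using P P' Q Q' by (simp_all add: det_mult unit_prod)
  ultimately show ?thesis
    unfolding equivalent_mat_def using A P(1) Q(1) P'(1) Q'(1)
    by (intro conjI exI[of _ "P' * P"] exI[of _ "Q * Q'"]) auto
qed

lemma equivalent_mat_transpose:
  assumes "equivalent_mat n A B"
  shows "equivalent_mat n A\<^sup>T B\<^sup>T"
proof -
  obtain P Q where A: "A \<in> carrier_mat n n" and P: "P \<in> carrier_mat n n" "det P dvd 1"
    and Q: "Q \<in> carrier_mat n n" "det Q dvd 1" and B: "P * A * Q = B"
    using assms unfolding equivalent_mat_def by blast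
  have "Q\<^sup>T * A\<^sup>T * P\<^sup>T = B\<^sup>T"
    unfolding B[symmetric] using A P(1) Q(1)
    by (simp add: transpose_mult[of _ n n _ n] assoc_mult_mat[of _ n n _ n _ n])
  then show ?thesis
    unfolding equivalent_mat_def using A P Q
    by (intro conjI exI[of _ "Q\<^sup>T"] exI[of _ "P\<^sup>T"]) (simp_all add: det_transpose)
qed

lemma equivalent_mat_mult_left:
  assumes "A \<in> carrier_mat n n" "P \<in> carrier_mat n n" "det P dvd 1"
  shows "equivalent_mat n A (P * A)"
  unfolding equivalent_mat_def using assms by (intro conjI exI[of _ P] exI[of _ "1\<^sub>m n"]) auto

lemma equivalent_mat_addrow:
  assumes "A \<in> carrier_mat n n" "k \<noteq> l" "l < n"
  shows "equivalent_mat n A (addrow a k l A)"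
  using equivalent_mat_mult_left[OF assms(1), of "addrow_mat n a k l"] assms
  by (simp add: addrow_mat det_addrow_mat)

lemma equivalent_mat_swaprows:
  assumes "A \<in> carrier_mat n n" "k < n" "l < n"
  shows "equivalent_mat n A (swaprows k l A)"
proof -
  have "swaprows_mat n m m = (1\<^sub>m n :: 'a mat)" for m
    by (rule eq_matI) auto
  then have "det (swaprows_mat n k l) dvd (1 :: 'a)"
    using assms by (cases "k = l") (auto simp: det_swaprows_mat)
  then show ?thesis
    using equivalent_mat_mult_left[OF assms(1), of "swaprows_mat n k l"] assms
    by (simp add: swaprows_mat)
qed

lemma equivalent_mat_multrow:
  assumes "A \<in> carrier_mat n n" "k < n" "a dvd 1"
  shows "equivalent_mat n A (multrow k a A)"
  using equivalent_mat_mult_left[OF assms(1), of "multrow_mat n k a"] assms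
  by (simp add: multrow_mat det_multrow_mat)

lemma equivalent_mat_four_block:
  fixes A :: "'a :: idom mat"
  assumes CD: "equivalent_mat m C D" and A: "A \<in> carrier_mat k k"
  shows "equivalent_mat (k + m) (four_block_mat A (0\<^sub>m k m) (0\<^sub>m m k) C)
    (four_block_mat A (0\<^sub>m k m) (0\<^sub>m m k) D)"
proof -
  obtain P Q where C: "C \<in> carrier_mat m m" and P: "P \<in> carrier_mat m m" "det P dvd 1"
    and Q: "Q \<in> carrier_mat m m" "det Q dvd 1" and D: "P * C * Q = D"
    using CD unfolding equivalent_mat_def by blast
  let ?lift = "\<lambda>X. four_block_mat (1\<^sub>m k) (0\<^sub>m k m) (0\<^sub>m m k) X"
  have det_lift: "det (?lift X) = det X" if "X \<in> carrier_mat m m" for X :: "'a mat"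
    using det_four_block_mat_lower_left_zero[of "1\<^sub>m k" k "0\<^sub>m k m" m "0\<^sub>m m k" X] that by simp
  have "?lift P * four_block_mat A (0\<^sub>m k m) (0\<^sub>m m k) C
      = four_block_mat A (0\<^sub>m k m) (0\<^sub>m m k) (P * C)"
    by (subst mult_four_block_mat[OF one_carrier_mat zero_carrier_mat zero_carrier_mat P(1) A
          zero_carrier_mat zero_carrier_mat C]) (use A C P in simp)
  also have "\<dots> * ?lift Q = four_block_mat A (0\<^sub>m k m) (0\<^sub>m m k) (P * C * Q)"
    by (subst mult_four_block_mat[OF A zero_carrier_mat zero_carrier_mat mult_carrier_mat[OF P(1) C]
          one_carrier_mat zero_carrier_mat zero_carrier_mat Q(1)]) (use A C P Q in simp)
  finally have "?lift P * four_block_mat A (0\<^sub>m k m) (0\<^sub>m m k) C * ?lift Q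
      = four_block_mat A (0\<^sub>m k m) (0\<^sub>m m k) D" using D by simp
  then show ?thesis
    unfolding equivalent_mat_def using A C P Q det_lift
    by (intro conjI exI[of _ "?lift P"] exI[of _ "?lift Q"]) auto
qed

lemma equivalent_mat_dvd_entries:
  assumes AB: "equivalent_mat n A B" and dvd: "\<forall>i<n. \<forall>j<n. g dvd A $$ (i,j)"
    and ij: "i < n" "j < n"
  shows "g dvd B $$ (i,j)"
proof -
  obtain P Q where A: "A \<in> carrier_mat n n" and P: "P \<in> carrier_mat n n"
    and Q: "Q \<in> carrier_mat n n" and B: "B = P * A * Q"
    using AB unfolding equivalent_mat_def by auto
  define R where "R = P * A"
  have R: "R \<in> carrier_mat n n" using A P unfolding R_def by simp
  have PA: "g dvd R $$ (i,k)" if "i < n" "k < n" for i k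
    using A P dvd that unfolding R_def by (auto simp: scalar_prod_def intro!: dvd_sum dvd_mult)
  have "B $$ (i,j) = (\<Sum>k = 0..<n. R $$ (i,k) * Q $$ (k,j))"
    unfolding B R_def[symmetric] using R Q ij by (simp add: scalar_prod_def)
  also have "g dvd \<dots>" using ij by (intro dvd_sum dvd_mult2 PA) auto
  finally show ?thesis .
qed

section \<open>Existence of the Smith normal form\<close>

lemma pivot_reduce_by_row:
  fixes A :: "int mat"
  assumes A: "A \<in> carrier_mat n n" and i: "i < n"
    and nz: "A $$ (0,0) \<noteq> 0" and ndvd: "\<not> A $$ (0,0) dvd A $$ (i,0)"
  shows "\<exists>B. equivalent_mat n A B \<and> B $$ (0,0) \<noteq> 0 \<and> \<bar>B $$ (0,0)\<bar> < \<bar>A $$ (0,0)\<bar>"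
proof -
  have i0: "i \<noteq> 0" using ndvd by (metis dvd_refl)
  define R where "R = addrow (- (A $$ (i,0) div A $$ (0,0))) i 0 A"
  define B where "B = swaprows 0 i R"
  have "equivalent_mat n A R"
    unfolding R_def by (rule equivalent_mat_addrow) (use A i i0 in auto)
  moreover have "equivalent_mat n R B"
    unfolding B_def by (rule equivalent_mat_swaprows) (use A i R_def in auto)
  ultimately have "equivalent_mat n A B" by (rule equivalent_mat_trans)
  moreover have "B $$ (0,0) = A $$ (i,0) mod A $$ (0,0)"
    unfolding B_def R_def using A i i0 by (simp add: minus_div_mult_eq_mod[symmetric])
  ultimately show ?thesis
    using ndvd abs_mod_less[OF nz] by (metis dvd_eq_mod_eq_0)
qed

lemma pivot_reduce_by_col:
  fixes A :: "int mat"
  assumes A: "A \<in> carrier_mat n n" and j: "j < n"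
    and nz: "A $$ (0,0) \<noteq> 0" and ndvd: "\<not> A $$ (0,0) dvd A $$ (0,j)"
  shows "\<exists>B. equivalent_mat n A B \<and> B $$ (0,0) \<noteq> 0 \<and> \<bar>B $$ (0,0)\<bar> < \<bar>A $$ (0,0)\<bar>"
proof -
  have n: "0 < n" using j by simp
  obtain B where AB: "equivalent_mat n A\<^sup>T B"
    and "B $$ (0,0) \<noteq> 0" "\<bar>B $$ (0,0)\<bar> < \<bar>A $$ (0,0)\<bar>"
    using pivot_reduce_by_row[of "A\<^sup>T" n j] A j n nz ndvd by auto
  moreover have "equivalent_mat n A B\<^sup>T"
    using equivalent_mat_transpose[OF AB] by simp
  moreover have "B\<^sup>T $$ (0,0) = B $$ (0,0)"
    using equivalent_mat_carrier[OF AB] n by simp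
  ultimately show ?thesis by metis
qed

(* Such a pivot divides its whole row and column: otherwise one Euclidean step would give a
   smaller nonzero pivot. *)
definition minimal_pivot :: "nat \<Rightarrow> int mat \<Rightarrow> bool" where
  "minimal_pivot n A \<longleftrightarrow> A $$ (0,0) \<noteq> 0 \<and>
     (\<forall>B. equivalent_mat n A B \<and> B $$ (0,0) \<noteq> 0 \<longrightarrow> \<bar>A $$ (0,0)\<bar> \<le> \<bar>B $$ (0,0)\<bar>)"

lemma minimal_pivot_exists:
  assumes A: "A \<in> carrier_mat n n" and ij: "i < n" "j < n" "A $$ (i,j) \<noteq> 0"
  shows "\<exists>N. equivalent_mat n A N \<and> minimal_pivot n N"
proof -
  define A1 where "A1 = swaprows 0 i A"
  define A2 where "A2 = swaprows 0 j A1\<^sup>T"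
  have "equivalent_mat n A A1"
    unfolding A1_def by (rule equivalent_mat_swaprows) (use A ij in auto)
  moreover have "equivalent_mat n A1 A2\<^sup>T"
    using equivalent_mat_transpose[of n "A1\<^sup>T" A2] equivalent_mat_swaprows[of "A1\<^sup>T" n 0 j]
      A ij unfolding A1_def A2_def by auto
  ultimately have "equivalent_mat n A A2\<^sup>T" by (rule equivalent_mat_trans)
  moreover have "A2\<^sup>T $$ (0,0) \<noteq> 0" unfolding A2_def A1_def using A ij by auto
  ultimately obtain N where N: "equivalent_mat n A N" "N $$ (0,0) \<noteq> 0"
    and least: "\<And>B. equivalent_mat n A B \<and> B $$ (0,0) \<noteq> 0 \<Longrightarrow> nat \<bar>N $$ (0,0)\<bar> \<le> nat \<bar>B $$ (0,0)\<bar>"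
    using ex_has_least_nat[where P = "\<lambda>B. equivalent_mat n A B \<and> B $$ (0,0) \<noteq> 0"
        and m = "\<lambda>B. nat \<bar>B $$ (0,0)\<bar>"] by blast
  have "minimal_pivot n N"
    unfolding minimal_pivot_def using N least equivalent_mat_trans[OF N(1)] by fastforce
  with N show ?thesis by blast
qed

lemma minimal_pivot_equivalent:
  assumes "minimal_pivot n A" "equivalent_mat n A B" "B $$ (0,0) = A $$ (0,0)"
  shows "minimal_pivot n B"
  using assms equivalent_mat_trans unfolding minimal_pivot_def by metis

lemma minimal_pivot_dvd_col:
  assumes "minimal_pivot n A" "A \<in> carrier_mat n n" "i < n"
  shows "A $$ (0,0) dvd A $$ (i,0)"
  using assms pivot_reduce_by_row[of A n i] unfolding minimal_pivot_def by force

lemma minimal_pivot_dvd_row: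
  assumes "minimal_pivot n A" "A \<in> carrier_mat n n" "j < n"
  shows "A $$ (0,0) dvd A $$ (0,j)"
  using assms pivot_reduce_by_col[of A n j] unfolding minimal_pivot_def by force

lemma clear_first_col:
  fixes A :: "int mat"
  assumes A: "A \<in> carrier_mat n n" and dvd: "\<forall>i<n. A $$ (0,0) dvd A $$ (i,0)"
  shows "\<exists>B. equivalent_mat n A B \<and> (\<forall>i<n. 0 < i \<longrightarrow> B $$ (i,0) = 0) \<and>
    (\<forall>j<n. B $$ (0,j) = A $$ (0,j))"
proof -
  define q where "q i = A $$ (i,0) div A $$ (0,0)" for i
  define L where "L = mat n n (\<lambda>(i,j). if i = j then 1 else if j = 0 then - q i else (0::int))"
  have L: "L \<in> carrier_mat n n" unfolding L_def by simp
  have "det L = prod_list (diag_mat L)"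
    by (rule det_lower_triangular[OF _ L]) (auto simp: L_def)
  also have "\<dots> = 1"
    unfolding prod_list_diag_prod by (rule prod.neutral) (simp add: L_def)
  finally have "det L = 1" .
  then have equiv: "equivalent_mat n A (L * A)" using equivalent_mat_mult_left[OF A L] by simp
  have LA: "(L * A) $$ (i,j) = (if i = 0 then A $$ (0,j) else A $$ (i,j) - q i * A $$ (0,j))"
    if "i < n" "j < n" for i j
  proof -
    have "(L * A) $$ (i,j) = (\<Sum>k<n. L $$ (i,k) * A $$ (k,j))"
      using that A L by (simp add: scalar_prod_def lessThan_atLeast0)
    also have "\<dots> = (\<Sum>k<n. (if k = i then A $$ (i,j) else 0) +
        (if k = 0 \<and> i \<noteq> 0 then - q i * A $$ (0,j) else 0))"
      using that by (intro sum.cong) (auto simp: L_def)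
    finally show ?thesis using that by (simp add: sum.distrib)
  qed
  have cleared: "A $$ (i,0) - q i * A $$ (0,0) = 0" if "i < n" for i
    using dvd that unfolding q_def by simp
  show ?thesis
    by (intro exI[of _ "L * A"] conjI equiv allI impI) (simp_all add: LA cleared)
qed

lemma minimal_pivot_dvd_all:
  assumes min: "minimal_pivot n A" and A: "A \<in> carrier_mat n n"
    and border: "\<forall>i<n. 0 < i \<longrightarrow> A $$ (i,0) = 0"
    and ij: "i < n" "j < n"
  shows "A $$ (0,0) dvd A $$ (i,j)"
proof (cases "i = 0")
  case True
  then show ?thesis using minimal_pivot_dvd_row[OF min A ij(2)] by simp
next
  case False
  define B where "B = addrow 1 0 i A"
  have "equivalent_mat n A B" unfolding B_def by (rule equivalent_mat_addrow) (use A ij False in auto)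
  moreover have B00: "B $$ (0,0) = A $$ (0,0)" unfolding B_def using A ij border False by simp
  ultimately have "minimal_pivot n B" by (rule minimal_pivot_equivalent[OF min])
  then have "A $$ (0,0) dvd A $$ (0,j) + A $$ (i,j)"
    using minimal_pivot_dvd_row[of n B j] A ij B00 unfolding B_def by (simp add: add.commute)
  then show ?thesis using minimal_pivot_dvd_row[OF min A ij(2)] by (simp add: dvd_add_right_iff)
qed

lemma minimal_pivot_clear_border:
  fixes A :: "int mat"
  assumes A: "A \<in> carrier_mat n n" and ij: "i < n" "j < n" "A $$ (i,j) \<noteq> 0"
  shows "\<exists>C. equivalent_mat n A C \<and> minimal_pivot n C \<and>
    (\<forall>i<n. 0 < i \<longrightarrow> C $$ (i,0) = 0 \<and> C $$ (0,i) = 0)"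
proof -
  obtain N where AN: "equivalent_mat n A N" and minN: "minimal_pivot n N"
    using minimal_pivot_exists[OF A ij] by blast
  have N: "N \<in> carrier_mat n n" using equivalent_mat_carrier[OF AN] .
  obtain N1 where NN1: "equivalent_mat n N N1" and col1: "\<forall>i<n. 0 < i \<longrightarrow> N1 $$ (i,0) = 0"
    and row1: "\<forall>j<n. N1 $$ (0,j) = N $$ (0,j)"
    using clear_first_col[OF N] minimal_pivot_dvd_col[OF minN N] by blast
  have N1: "N1 \<in> carrier_mat n n" using equivalent_mat_carrier[OF NN1] .
  have "\<forall>i<n. N1\<^sup>T $$ (0,0) dvd N1\<^sup>T $$ (i,0)"
    using N1 ij row1 minimal_pivot_dvd_row[OF minN N] by auto
  then obtain N2 where N1N2: "equivalent_mat n N1\<^sup>T N2" and col2: "\<forall>i<n. 0 < i \<longrightarrow> N2 $$ (i,0) = 0"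
    and row2: "\<forall>j<n. N2 $$ (0,j) = N1\<^sup>T $$ (0,j)"
    using clear_first_col[of "N1\<^sup>T" n] N1 by auto
  have N2: "N2 \<in> carrier_mat n n" using equivalent_mat_carrier[OF N1N2] .
  have "equivalent_mat n N1 N2\<^sup>T" using equivalent_mat_transpose[OF N1N2] by simp
  then have NC: "equivalent_mat n N N2\<^sup>T" by (rule equivalent_mat_trans[OF NN1])
  have "N2\<^sup>T $$ (0,0) = N $$ (0,0)" using N2 N1 row1 row2 ij by auto
  then have "minimal_pivot n N2\<^sup>T" by (rule minimal_pivot_equivalent[OF minN NC])
  moreover have "\<forall>i<n. 0 < i \<longrightarrow> N2\<^sup>T $$ (i,0) = 0 \<and> N2\<^sup>T $$ (0,i) = 0"
    using N1 N2 col1 col2 row2 by auto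
  ultimately show ?thesis using equivalent_mat_trans[OF AN NC] by blast
qed

lemma smith_pivot:
  fixes A :: "int mat"
  assumes A: "A \<in> carrier_mat n n" and n: "0 < n"
  shows "\<exists>B. equivalent_mat n A B \<and> 0 \<le> B $$ (0,0) \<and>
    (\<forall>i<n. 0 < i \<longrightarrow> B $$ (i,0) = 0 \<and> B $$ (0,i) = 0) \<and>
    (\<forall>i<n. \<forall>j<n. B $$ (0,0) dvd B $$ (i,j))"
proof (cases "\<exists>i<n. \<exists>j<n. A $$ (i,j) \<noteq> 0")
  case False
  then show ?thesis using equivalent_mat_refl[OF A] n by (intro exI[of _ A]) auto
next
  case True
  then obtain C where AC: "equivalent_mat n A C" and minC: "minimal_pivot n C"
    and border: "\<forall>i<n. 0 < i \<longrightarrow> C $$ (i,0) = 0 \<and> C $$ (0,i) = 0"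
    using minimal_pivot_clear_border[OF A] by blast
  have C: "C \<in> carrier_mat n n" using equivalent_mat_carrier[OF AC] .
  let ?s = "sgn (C $$ (0,0))"
  have "?s dvd 1" using minC unfolding minimal_pivot_def by (cases "C $$ (0,0) > 0") auto
  define B where "B = multrow 0 ?s C"
  have "equivalent_mat n C B" unfolding B_def by (rule equivalent_mat_multrow[OF C n]) fact
  then have AB: "equivalent_mat n A B" by (rule equivalent_mat_trans[OF AC])
  have B: "B $$ (i,j) = (if i = 0 then ?s * C $$ (i,j) else C $$ (i,j))" if "i < n" "j < n" for i j
    using C that unfolding B_def by simp
  have B00: "B $$ (0,0) = \<bar>C $$ (0,0)\<bar>" using B[OF n n] by (simp add: abs_sgn mult.commute)
  have dvd: "\<bar>C $$ (0,0)\<bar> dvd C $$ (i,j)" if "i < n" "j < n" for i j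
    using minimal_pivot_dvd_all[OF minC C _ that] border by simp
  show ?thesis
  proof (intro exI[of _ B] conjI allI impI AB)
    show "0 \<le> B $$ (0,0)" using B00 by simp
    fix i assume "i < n" "0 < i"
    then show "B $$ (i,0) = 0" "B $$ (0,i) = 0" using B border n by simp_all
  next
    fix i j assume "i < n" "j < n"
    then show "B $$ (0,0) dvd B $$ (i,j)" using B B00 dvd by simp
  qed
qed

lemma is_smith_normal_form_of_iff:
  assumes "A \<in> carrier_mat n n"
  shows "is_smith_normal_form_of n A D \<longleftrightarrow> equivalent_mat n A D \<and> diagonal_mat D \<and>
    (\<forall>i<n. 0 \<le> D $$ (i,i)) \<and> (\<forall>i. i + 1 < n \<longrightarrow> D $$ (i,i) dvd D $$ (i+1,i+1))"
  using assms equivalent_mat_carrier invertible_mat_iff_det_dvd_one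
  unfolding is_smith_normal_form_of_def equivalent_mat_def by metis

lemma is_smith_normal_form_of_equivalent:
  assumes AB: "equivalent_mat n A B" and D: "is_smith_normal_form_of n B D"
  shows "is_smith_normal_form_of n A D"
proof -
  have A: "A \<in> carrier_mat n n" using AB unfolding equivalent_mat_def by simp
  have "equivalent_mat n B D"
    using D is_smith_normal_form_of_iff[OF equivalent_mat_carrier[OF AB]] by simp
  then have "equivalent_mat n A D" by (rule equivalent_mat_trans[OF AB])
  then show ?thesis
    using D is_smith_normal_form_of_iff[OF A] is_smith_normal_form_of_iff[OF equivalent_mat_carrier[OF AB]]
    by simp
qed

lemma is_smith_normal_form_of_four_block:
  fixes C :: "int mat"
  assumes CD: "is_smith_normal_form_of m C D" and C: "C \<in> carrier_mat m m"
    and d: "0 \<le> d" and dvd: "\<forall>i<m. \<forall>j<m. d dvd C $$ (i,j)"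
  shows "is_smith_normal_form_of (Suc m)
    (four_block_mat (mat 1 1 (\<lambda>_. d)) (0\<^sub>m 1 m) (0\<^sub>m m 1) C)
    (four_block_mat (mat 1 1 (\<lambda>_. d)) (0\<^sub>m 1 m) (0\<^sub>m m 1) D)"
    (is "is_smith_normal_form_of _ ?C ?D")
proof -
  have equiv: "equivalent_mat m C D" and diag: "diagonal_mat D"
    and nonneg: "\<forall>i<m. 0 \<le> D $$ (i,i)"
    and chain: "\<forall>i. i + 1 < m \<longrightarrow> D $$ (i,i) dvd D $$ (i+1,i+1)"
    using CD by (auto simp: is_smith_normal_form_of_iff[OF C])
  have D: "D \<in> carrier_mat m m" using equivalent_mat_carrier[OF equiv] .
  have dvd': "d dvd D $$ (i,j)" if "i < m" "j < m" for i j
    using equivalent_mat_dvd_entries[OF equiv dvd that] .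
  have "equivalent_mat (Suc m) ?C ?D"
    using equivalent_mat_four_block[OF equiv, of "mat 1 1 (\<lambda>_. d)" 1] by simp
  moreover have "diagonal_mat ?D"
    using diag D unfolding diagonal_mat_def by auto
  moreover have "\<forall>i<Suc m. 0 \<le> ?D $$ (i,i)"
    using d nonneg D by auto
  moreover have "?D $$ (i,i) dvd ?D $$ (i+1,i+1)" if "i + 1 < Suc m" for i
    using that chain dvd' D by (cases i) auto
  moreover have "?C \<in> carrier_mat (Suc m) (Suc m)" using C by auto
  ultimately show ?thesis by (simp add: is_smith_normal_form_of_iff)
qed

theorem smith_normal_form_exists:
  fixes A :: "int mat"
  assumes "A \<in> carrier_mat n n"
  shows "\<exists>D. is_smith_normal_form_of n A D"
  using assms
proof (induction n arbitrary: A)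
  case 0
  then show ?case
    using equivalent_mat_refl[OF 0] by (auto simp: is_smith_normal_form_of_iff diagonal_mat_def)
next
  case (Suc m)
  obtain B where AB: "equivalent_mat (Suc m) A B" and d: "0 \<le> B $$ (0,0)"
    and border: "\<forall>i<Suc m. 0 < i \<longrightarrow> B $$ (i,0) = 0 \<and> B $$ (0,i) = 0"
    and dvd: "\<forall>i<Suc m. \<forall>j<Suc m. B $$ (0,0) dvd B $$ (i,j)"
    using smith_pivot[OF Suc.prems] by blast
  have B: "B \<in> carrier_mat (Suc m) (Suc m)" using equivalent_mat_carrier[OF AB] .
  define p where "p = B $$ (0,0)"
  define C where "C = mat m m (\<lambda>(i,j). B $$ (Suc i, Suc j))"
  have C: "C \<in> carrier_mat m m" unfolding C_def by simp
  have B_block: "B = four_block_mat (mat 1 1 (\<lambda>_. p)) (0\<^sub>m 1 m) (0\<^sub>m m 1) C"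
    by (rule eq_matI) (use B border in \<open>auto simp: C_def p_def\<close>)
  obtain D where "is_smith_normal_form_of m C D"
    using Suc.IH[OF C] by blast
  moreover have "\<forall>i<m. \<forall>j<m. p dvd C $$ (i,j)"
    using dvd unfolding C_def p_def by simp
  ultimately have "is_smith_normal_form_of (Suc m) B
      (four_block_mat (mat 1 1 (\<lambda>_. p)) (0\<^sub>m 1 m) (0\<^sub>m m 1) D)"
    unfolding B_block using d p_def by (intro is_smith_normal_form_of_four_block[OF _ C]) auto
  then show ?case using is_smith_normal_form_of_equivalent[OF AB] by blast
qed

section \<open>The walk matrix of \<open>D\<^sub>n\<close>\<close>

(* Matrices acting on index functions instead of vectors, so that linear combinations are plain
   sums; only the arguments below dim_col A are read. *)
definition mat_act :: "'a :: comm_semiring_1 mat \<Rightarrow> (nat \<Rightarrow> 'a) \<Rightarrow> nat \<Rightarrow> 'a" where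
  "mat_act A x i = (\<Sum>j<dim_col A. A $$ (i,j) * x j)"

lemma pow_mat_mult_vec_eq_mat_act:
  assumes A: "A \<in> carrier_mat n n"
  shows "(A ^\<^sub>m k) *\<^sub>v vec n x = vec n ((mat_act A ^^ k) x)"
proof (induction k arbitrary: x)
  case 0
  then show ?case using A by simp
next
  case (Suc k)
  have act: "A *\<^sub>v vec n x = vec n (mat_act A x)"
    using A by (intro eq_vecI) (auto simp: mat_act_def scalar_prod_def lessThan_atLeast0)
  have "(A ^\<^sub>m Suc k) *\<^sub>v vec n x = (A ^\<^sub>m k) *\<^sub>v (A *\<^sub>v vec n x)"
    using A by (simp add: assoc_mult_mat_vec[of _ n n _ n])
  also have "\<dots> = vec n ((mat_act A ^^ Suc k) x)"
    unfolding act Suc.IH by (simp only: funpow_Suc_right comp_def)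
  finally show ?case .
qed

lemma funpow_mat_act_cong:
  assumes A: "A \<in> carrier_mat n n" and xy: "\<forall>j<n. x j = y j" and i: "i < n"
  shows "(mat_act A ^^ k) x i = (mat_act A ^^ k) y i"
  using i
proof (induction k arbitrary: i)
  case (Suc k)
  then show ?case using A by (simp add: mat_act_def)
qed (use xy in simp)

lemma funpow_mat_act_sum:
  "(mat_act A ^^ k) (\<lambda>i. \<Sum>m\<in>S. c m * g m i) = (\<lambda>i. \<Sum>m\<in>S. c m * (mat_act A ^^ k) (g m) i)"
proof (induction k)
  case (Suc k)
  have "mat_act A (\<lambda>i. \<Sum>m\<in>S. c m * h m i) = (\<lambda>i. \<Sum>m\<in>S. c m * mat_act A (h m) i)" for h
    unfolding mat_act_def
    by (simp add: sum_distrib_left sum.swap[where A = S] mult.left_commute)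
  then show ?case using Suc by simp
qed simp

lemma funpow_mat_act_relation_transfer:
  assumes A: "A \<in> carrier_mat n n"
    and rel: "\<forall>i<n. (mat_act A ^^ N) u i = (\<Sum>m\<in>M. c m * (mat_act A ^^ m) u i)"
    and x: "\<forall>i<n. x i = (\<Sum>k\<in>K. d k * (mat_act A ^^ k) u i)"
    and i: "i < n"
  shows "(mat_act A ^^ N) x i = (\<Sum>m\<in>M. c m * (mat_act A ^^ m) x i)"
proof -
  let ?f = "mat_act A"
  have comm: "(?f ^^ a) ((?f ^^ b) v) = (?f ^^ b) ((?f ^^ a) v)" for a b v
    by (metis add.commute comp_apply funpow_add)
  have relN: "(?f ^^ k) ((?f ^^ N) u) i = (?f ^^ k) (\<lambda>i. \<Sum>m\<in>M. c m * (?f ^^ m) u i) i" for k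
    by (rule funpow_mat_act_cong[OF A _ i]) (use rel in simp)
  have xN: "(?f ^^ m) (\<lambda>i. \<Sum>k\<in>K. d k * (?f ^^ k) u i) i = (?f ^^ m) x i" for m
    by (rule funpow_mat_act_cong[OF A _ i]) (use x in simp)
  have "(?f ^^ N) x i = (?f ^^ N) (\<lambda>i. \<Sum>k\<in>K. d k * (?f ^^ k) u i) i"
    by (simp only: xN)
  also have "\<dots> = (\<Sum>k\<in>K. d k * (?f ^^ k) ((?f ^^ N) u) i)"
    by (simp add: funpow_mat_act_sum comm)
  also have "\<dots> = (\<Sum>k\<in>K. d k * (?f ^^ k) (\<lambda>i. \<Sum>m\<in>M. c m * (?f ^^ m) u i) i)"
    by (simp only: relN)
  also have "\<dots> = (\<Sum>m\<in>M. c m * (\<Sum>k\<in>K. d k * (?f ^^ k) ((?f ^^ m) u) i))"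
    by (simp add: funpow_mat_act_sum sum_distrib_left sum.swap[where A = K] mult.left_commute)
  also have "\<dots> = (\<Sum>m\<in>M. c m * (?f ^^ m) (\<lambda>i. \<Sum>k\<in>K. d k * (?f ^^ k) u i) i)"
    by (simp add: funpow_mat_act_sum comm)
  also have "\<dots> = (\<Sum>m\<in>M. c m * (?f ^^ m) x i)"
    by (simp only: xN)
  finally show ?thesis .
qed

lemma Dn_edge_Suc_iff:
  "Dn_edge n (Suc i) (Suc j) \<longleftrightarrow> (i \<le> 1 \<and> j = 2) \<or> (i = 2 \<and> j \<le> 1) \<or>
     (2 \<le> i \<and> j = i + 1 \<and> j < n) \<or> (2 \<le> j \<and> i = j + 1 \<and> i < n)"
  unfolding Dn_edge_def doubleton_eq_iff
  by (auto 0 3 intro: exI[of _ "Suc i"] exI[of _ "Suc j"])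

lemma Dn_adj_carrier: "Dn_adj n \<in> carrier_mat n n"
  unfolding Dn_adj_def by simp

lemma mat_act_Dn_adj:
  assumes n: "4 \<le> n" and i: "i < n"
  shows "mat_act (Dn_adj n) x i =
    (if i \<le> 1 then x 2
     else if i = 2 then x 0 + x 1 + x 3
     else x (i - 1) + (if i + 1 < n then x (i + 1) else 0))"
proof -
  define adj where "adj j \<longleftrightarrow> (i \<le> 1 \<and> j = 2) \<or> (i = 2 \<and> j \<le> 1) \<or>
     (2 \<le> i \<and> j = i + 1 \<and> j < n) \<or> (2 \<le> j \<and> i = j + 1 \<and> i < n)" for j
  have act: "mat_act (Dn_adj n) x i = (\<Sum>j<n. if adj j then x j else 0)"
    unfolding mat_act_def Dn_adj_def adj_def using i by (intro sum.cong) (auto simp: Dn_edge_Suc_iff)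
  consider "i \<le> 1" | "i = 2" | "3 \<le> i" by linarith
  then show ?thesis
  proof cases
    case 1
    have "(\<Sum>j<n. if adj j then x j else 0) = (\<Sum>j<n. if j = 2 then x j else 0)"
      using 1 by (intro sum.cong) (auto simp: adj_def)
    then show ?thesis using act 1 n by simp
  next
    case 2
    have "(\<Sum>j<n. if adj j then x j else 0) =
        (\<Sum>j<n. (if j = 0 then x j else 0) + (if j = 1 then x j else 0) + (if j = 3 then x j else 0))"
      using 2 by (intro sum.cong) (auto simp: adj_def)
    then show ?thesis using act 2 n by (simp add: sum.distrib)
  next
    case 3
    have "(\<Sum>j<n. if adj j then x j else 0) =
        (\<Sum>j<n. (if j = i - 1 then x j else 0) + (if j = i + 1 then x j else 0))"
      using 3 i by (intro sum.cong) (auto simp: adj_def)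
    then show ?thesis using act 3 i by (simp add: sum.distrib)
  qed
qed

(* A^k e_n; with 0-based indices vertex n is index n - 1. *)
definition Dn_krylov :: "nat \<Rightarrow> nat \<Rightarrow> nat \<Rightarrow> int" where
  "Dn_krylov n k = (mat_act (Dn_adj n) ^^ k) (\<lambda>i. if i = n - 1 then 1 else 0)"

lemma Dn_krylov_Suc: "Dn_krylov n (Suc k) = mat_act (Dn_adj n) (Dn_krylov n k)"
  by (simp add: Dn_krylov_def)

lemma Dn_krylov_triangular:
  assumes n: "4 \<le> n" and k: "k \<le> n - 3"
  shows "(\<forall>i < n - 1 - k. Dn_krylov n k i = 0) \<and> Dn_krylov n k (n - 1 - k) = 1"
  using k
proof (induction k)
  case 0
  show ?case by (auto simp: Dn_krylov_def)
next
  case (Suc k)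
  then have zero: "\<And>i. i < n - 1 - k \<Longrightarrow> Dn_krylov n k i = 0"
    and one: "Dn_krylov n k (n - 1 - k) = 1" and k: "k \<le> n - 4" by auto
  have "Dn_krylov n (Suc k) i = 0" if "i < n - 1 - Suc k" for i
    using that zero k n by (auto simp: Dn_krylov_Suc mat_act_Dn_adj)
  moreover have "Dn_krylov n (Suc k) (n - 1 - Suc k) = 1"
  proof -
    have "n - 1 - k = Suc (n - 1 - Suc k)" using k n by simp
    then show ?thesis using zero one k n by (auto simp: Dn_krylov_Suc mat_act_Dn_adj)
  qed
  ultimately show ?case by blast
qed

lemma Dn_krylov_top:
  assumes n: "4 \<le> n"
  shows "Dn_krylov n (n - 2) 0 = 1" "Dn_krylov n (n - 2) 1 = 1"
proof -
  have "Dn_krylov n (n - 3) 2 = 1" using Dn_krylov_triangular[OF n, of "n - 3"] n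
    by (simp add: numeral_eq_Suc)
  moreover have "n - 2 = Suc (n - 3)" using n by simp
  ultimately show "Dn_krylov n (n - 2) 0 = 1" "Dn_krylov n (n - 2) 1 = 1"
    using n by (simp_all add: Dn_krylov_Suc mat_act_Dn_adj)
qed

lemma Dn_krylov_span_tail:
  assumes n: "4 \<le> n" and s: "s \<le> n - 2" and x: "\<forall>i < n - s. x i = 0"
  shows "\<exists>d. \<forall>i<n. x i = (\<Sum>k<s. d k * Dn_krylov n k i)"
  using s x
proof (induction s arbitrary: x)
  case 0
  then show ?case by simp
next
  case (Suc s)
  define a where "a = x (n - 1 - s)"
  define y where "y i = x i - a * Dn_krylov n s i" for i
  have "y i = 0" if "i < n - s" for i
  proof (cases "i = n - 1 - s")
    case True
    then show ?thesis using Dn_krylov_triangular[OF n, of s] Suc.prems(1) by (simp add: y_def a_def)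
  next
    case False
    then show ?thesis using Dn_krylov_triangular[OF n, of s] Suc.prems that by (simp add: y_def)
  qed
  then obtain d where d: "\<forall>i<n. y i = (\<Sum>k<s. d k * Dn_krylov n k i)"
    using Suc.IH[of y] Suc.prems(1) by auto
  show ?case
    by (rule exI[of _ "d(s := a)"]) (use d in \<open>simp add: y_def algebra_simps\<close>)
qed

lemma Dn_krylov_span:
  assumes n: "4 \<le> n" and x01: "x 0 = x 1"
  shows "\<exists>d. \<forall>i<n. x i = (\<Sum>k<n - 1. d k * Dn_krylov n k i)"
proof -
  define y where "y i = x i - x 0 * Dn_krylov n (n - 2) i" for i
  have "y 0 = 0" "y 1 = 0" using Dn_krylov_top[OF n] x01 by (simp_all add: y_def)
  moreover have "n - (n - 2) = 2" using n by simp
  ultimately have "\<forall>i < n - (n - 2). y i = 0" by (simp add: less_2_cases_iff)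
  then obtain d where d: "\<forall>i<n. y i = (\<Sum>k<n - 2. d k * Dn_krylov n k i)"
    using Dn_krylov_span_tail[OF n, of "n - 2" y] by auto
  have n1: "n - 1 = Suc (n - 2)" using n by simp
  show ?thesis
  proof (intro exI[of _ "d(n - 2 := x 0)"] allI impI)
    fix i assume i: "i < n"
    have "(\<Sum>k<n - 1. (d(n - 2 := x 0)) k * Dn_krylov n k i)
        = (\<Sum>k<n - 2. d k * Dn_krylov n k i) + x 0 * Dn_krylov n (n - 2) i"
      unfolding n1 by simp
    also have "\<dots> = x i" using d i unfolding y_def by (metis diff_add_cancel)
    finally show "x i = (\<Sum>k<n - 1. (d(n - 2 := x 0)) k * Dn_krylov n k i)" by simp
  qed
qed

lemma funpow_mat_act_Dn_adj_0_1:
  assumes n: "4 \<le> n" and x01: "x 0 = x 1"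
  shows "(mat_act (Dn_adj n) ^^ k) x 0 = (mat_act (Dn_adj n) ^^ k) x 1"
  using x01 n by (cases k) (simp_all add: mat_act_Dn_adj)

lemma walk_mat_Dn_adj_index:
  assumes "i < n" "j < n"
  shows "walk_mat n (Dn_adj n) $$ (i,j) = (mat_act (Dn_adj n) ^^ j) (\<lambda>_. 1) i"
  unfolding walk_mat_def pow_mat_mult_vec_eq_mat_act[OF Dn_adj_carrier] using assms by simp

lemma walk_mat_Dn_adj_row_0_1:
  assumes "4 \<le> n" "j < n"
  shows "walk_mat n (Dn_adj n) $$ (0,j) = walk_mat n (Dn_adj n) $$ (1,j)"
  using assms funpow_mat_act_Dn_adj_0_1[of n "\<lambda>_. 1"] by (simp add: walk_mat_Dn_adj_index)

lemma walk_mat_Dn_adj_last_col: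
  assumes n: "4 \<le> n"
  shows "\<exists>c. \<forall>i<n. walk_mat n (Dn_adj n) $$ (i, n - 1)
    = (\<Sum>j<n - 1. c j * walk_mat n (Dn_adj n) $$ (i,j))"
proof -
  let ?f = "mat_act (Dn_adj n)" and ?e = "\<lambda>_::nat. 1::int"
  have "Dn_krylov n (n - 1) 0 = Dn_krylov n (n - 1) 1"
    unfolding Dn_krylov_def by (rule funpow_mat_act_Dn_adj_0_1) (use n in auto)
  then obtain c where c: "\<forall>i<n. Dn_krylov n (n - 1) i = (\<Sum>m<n - 1. c m * Dn_krylov n m i)"
    using Dn_krylov_span[OF n] by blast
  obtain d where d: "\<forall>i<n. ?e i = (\<Sum>k<n - 1. d k * Dn_krylov n k i)"
    using Dn_krylov_span[OF n, of ?e] by auto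
  show ?thesis
  proof (intro exI[of _ c] allI impI)
    fix i assume i: "i < n"
    have "(?f ^^ (n - 1)) ?e i = (\<Sum>m<n - 1. c m * (?f ^^ m) ?e i)"
      by (rule funpow_mat_act_relation_transfer[OF Dn_adj_carrier c[unfolded Dn_krylov_def]
            d[unfolded Dn_krylov_def] i])
    also have "\<dots> = (\<Sum>m<n - 1. c m * walk_mat n (Dn_adj n) $$ (i,m))"
      using i by (intro sum.cong) (auto simp: walk_mat_Dn_adj_index)
    finally show "walk_mat n (Dn_adj n) $$ (i, n - 1) = (\<Sum>m<n - 1. c m * walk_mat n (Dn_adj n) $$ (i,m))"
      using i n by (simp add: walk_mat_Dn_adj_index)
  qed
qed

section \<open>Deleting the first row and the last column\<close>

lemma pad_hat_walk_hat_index: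
  assumes "i < n" "j < n"
  shows "pad_hat n (walk_hat n W) $$ (i,j) = (if i = 0 \<or> j = n - 1 then 0 else W $$ (i,j))"
  using assms unfolding pad_hat_def walk_hat_def by auto

lemma clear_dependent_last_col:
  fixes W :: "int mat"
  assumes W: "W \<in> carrier_mat n n" and n: "1 \<le> n"
    and last: "\<forall>i<n. W $$ (i, n - 1) = (\<Sum>j<n - 1. c j * W $$ (i,j))"
  shows "\<exists>V. V \<in> carrier_mat n n \<and> det V = 1 \<and>
    (\<forall>i<n. \<forall>j<n. (W * V) $$ (i,j) = (if j < n - 1 then W $$ (i,j) else 0))"
proof -
  define V where "V = mat n n (\<lambda>(i,j). if i = j then 1 else if j = n - 1 then - c i else (0::int))"
  have V: "V \<in> carrier_mat n n" unfolding V_def by simp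
  have "det V = prod_list (diag_mat V)"
    by (rule det_upper_triangular[OF _ V]) (auto simp: upper_triangular_def V_def)
  also have "\<dots> = 1"
    unfolding prod_list_diag_prod by (rule prod.neutral) (simp add: V_def)
  finally have detV: "det V = 1" .
  have n1: "n = Suc (n - 1)" using n by simp
  have "(W * V) $$ (i,j) = (if j < n - 1 then W $$ (i,j) else 0)" if ij: "i < n" "j < n" for i j
  proof -
    have "(W * V) $$ (i,j) = (\<Sum>k<n. W $$ (i,k) * V $$ (k,j))"
      using W V ij by (simp add: scalar_prod_def lessThan_atLeast0)
    also have "\<dots> = (\<Sum>k<n - 1. W $$ (i,k) * V $$ (k,j)) + W $$ (i, n - 1) * V $$ (n - 1, j)"
      by (rule sum.lessThan_Suc[of _ "n - 1", folded n1])
    also have "\<dots> = (if j < n - 1 then W $$ (i,j) else 0)"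
    proof (cases "j < n - 1")
      case True
      then show ?thesis using ij by (simp add: V_def if_distrib[of "(*) _"] cong: if_cong)
    next
      case False
      then have "j = n - 1" using ij by simp
      then show ?thesis using ij last by (simp add: V_def sum_negf mult.commute)
    qed
    finally show ?thesis .
  qed
  then show ?thesis using V detV by blast
qed

lemma equivalent_mat_pad_hat:
  assumes W: "W \<in> carrier_mat n n" and n: "2 \<le> n"
    and rows: "\<forall>j<n. W $$ (0,j) = W $$ (1,j)"
    and last: "\<forall>i<n. W $$ (i, n - 1) = (\<Sum>j<n - 1. c j * W $$ (i,j))"
  shows "equivalent_mat n W (pad_hat n (walk_hat n W))"
proof -
  obtain V where V: "V \<in> carrier_mat n n" and detV: "det V = 1"
    and WV: "\<forall>i<n. \<forall>j<n. (W * V) $$ (i,j) = (if j < n - 1 then W $$ (i,j) else 0)"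
    using clear_dependent_last_col[OF W _ last] n by auto
  define P where "P = addrow_mat n (-1 :: int) 0 1"
  have P: "P \<in> carrier_mat n n" and detP: "det P = 1"
    unfolding P_def by (simp_all add: det_addrow_mat)
  define M where "M = W * V"
  have M: "M \<in> carrier_mat n n" unfolding M_def using W V by simp
  have WM: "\<forall>i<n. \<forall>j<n. M $$ (i,j) = (if j < n - 1 then W $$ (i,j) else 0)"
    unfolding M_def by (fact WV)
  have "P * W * V = addrow (-1) 0 1 M"
    unfolding P_def M_def using W V n
    by (simp add: assoc_mult_mat[of _ n n _ n _ n] addrow_mat[OF mult_carrier_mat[OF W V]])
  also have "\<dots> = pad_hat n (walk_hat n W)"
  proof (rule eq_matI)
    fix i j assume "i < dim_row (pad_hat n (walk_hat n W))" "j < dim_col (pad_hat n (walk_hat n W))"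
    then have ij: "i < n" "j < n" unfolding pad_hat_def by simp_all
    have "M $$ (0,j) = M $$ (1,j)"
      using WM rows ij n by simp
    then have "addrow (-1) 0 1 M $$ (i,j) = (if i = 0 then 0 else M $$ (i,j))"
      using M ij by simp
    moreover have "pad_hat n (walk_hat n W) $$ (i,j)
        = (if i = 0 then 0 else if j < n - 1 then W $$ (i,j) else 0)"
      using ij by (auto simp: pad_hat_walk_hat_index)
    ultimately show "addrow (-1) 0 1 M $$ (i,j) = pad_hat n (walk_hat n W) $$ (i,j)"
      using WM ij by simp
  qed (use M in \<open>simp_all add: pad_hat_def\<close>)
  finally show ?thesis
    unfolding equivalent_mat_def using W V P detV detP
    by (intro conjI exI[of _ P] exI[of _ V]) simp_all
qed

lemma rank_eq_by_linear_bij_col_space: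
  fixes T :: "'a :: field vec \<Rightarrow> 'a vec" and A B :: "'a mat"
  assumes A: "A \<in> carrier_mat n na" and B: "B \<in> carrier_mat m nb"
    and bij: "bij_betw T (vec_space.col_space n A) (vec_space.col_space m B)"
    and add: "\<And>x y. x \<in> carrier_vec n \<Longrightarrow> y \<in> carrier_vec n \<Longrightarrow> T (x + y) = T x + T y"
    and smult: "\<And>a x. x \<in> carrier_vec n \<Longrightarrow> T (a \<cdot>\<^sub>v x) = a \<cdot>\<^sub>v T x"
  shows "vec_space.rank n A = vec_space.rank m B"
proof -
  let ?VA = "module_vec TYPE('a) n\<lparr>carrier := vec_space.col_space n A\<rparr>"
  let ?VB = "module_vec TYPE('a) m\<lparr>carrier := vec_space.col_space m B\<rparr>"
  have "set (cols A) \<subseteq> carrier (module_vec TYPE('a) n)"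
    using A cols_dim[of A] by (simp add: module_vec_simps)
  then have sA: "subspace class_ring (vec_space.col_space n A) (module_vec TYPE('a) n)"
    unfolding vec_space.col_space_def by (rule vectorspace.span_is_subspace[OF vec_vs])
  have "set (cols B) \<subseteq> carrier (module_vec TYPE('a) m)"
    using B cols_dim[of B] by (simp add: module_vec_simps)
  then have sB: "subspace class_ring (vec_space.col_space m B) (module_vec TYPE('a) m)"
    unfolding vec_space.col_space_def by (rule vectorspace.span_is_subspace[OF vec_vs])
  have vA: "vectorspace class_ring ?VA" by (rule vectorspace.subspace_is_vs[OF vec_vs sA])
  have vB: "vectorspace class_ring ?VB" by (rule vectorspace.subspace_is_vs[OF vec_vs sB])
  have SA: "vec_space.col_space n A \<subseteq> carrier_vec n"
    using sA unfolding subspace_def submodule_def by (auto simp: module_vec_simps)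
  have "linear_map class_ring ?VA ?VB T"
    unfolding linear_map_def mod_hom_def mod_hom_axioms_def LinearCombinations.module_hom_def
    using vA vB bij SA add smult
    by (auto simp: vectorspace_def bij_betw_def module_vec_simps subset_iff)
  moreover have "vectorspace.fin_dim class_ring ?VA"
    using vec_space.fin_dim_span_cols[OF A] unfolding vec_space.col_space_def .
  ultimately have "vectorspace.dim class_ring ?VA = vectorspace.dim class_ring ?VB"
    by (rule linear_map.dim_eq) (use bij in \<open>simp_all add: bij_betw_def\<close>)
  then show ?thesis by (simp add: vec_space.rank_def vec_space.col_space_def)
qed

lemma inj_on_drop_first_coordinate:
  assumes n: "2 \<le> n"
  shows "inj_on (\<lambda>v. vec (n - 1) (\<lambda>i. v $ Suc i)) {v \<in> carrier_vec n. v $ 0 = v $ 1}"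
proof (rule inj_onI)
  fix a b :: "'a vec"
  assume a: "a \<in> {v \<in> carrier_vec n. v $ 0 = v $ 1}" and b: "b \<in> {v \<in> carrier_vec n. v $ 0 = v $ 1}"
    and ab: "vec (n - 1) (\<lambda>i. a $ Suc i) = vec (n - 1) (\<lambda>i. b $ Suc i)"
  have tail: "a $ Suc i = b $ Suc i" if "i < n - 1" for i
    using arg_cong[OF ab, of "\<lambda>v. v $ i"] that by simp
  show "a = b"
  proof (rule eq_vecI)
    fix i assume "i < dim_vec b"
    then show "a $ i = b $ i" using a b tail[of "i - 1"] tail[of 0] n by (cases i) auto
  qed (use a b in auto)
qed

lemma drop_first_coordinate_mult_vec:
  fixes W :: "int mat" and x :: "rat vec"
  assumes W: "W \<in> carrier_mat n n" and n: "1 \<le> n" and x: "x \<in> carrier_vec n"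
    and last: "\<forall>i<n. W $$ (i, n - 1) = (\<Sum>j<n - 1. c j * W $$ (i,j))"
  shows "vec (n - 1) (\<lambda>i. (map_mat of_int W *\<^sub>v x) $ Suc i)
    = map_mat of_int (walk_hat n W) *\<^sub>v vec (n - 1) (\<lambda>k. x $ k + of_int (c k) * x $ (n - 1))"
    (is "?Tx = ?H *\<^sub>v ?z")
proof (rule eq_vecI)
  fix i assume "i < dim_vec (?H *\<^sub>v ?z)"
  then have i: "i < n - 1" by (simp add: walk_hat_def)
  have n1: "n = Suc (n - 1)" using n by simp
  have "?Tx $ i = (\<Sum>k<n. of_int (W $$ (Suc i,k)) * x $ k)"
    using W x i by (simp add: scalar_prod_def lessThan_atLeast0)
  also have "\<dots> = (\<Sum>k<n - 1. of_int (W $$ (Suc i,k)) * x $ k)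
      + of_int (W $$ (Suc i, n - 1)) * x $ (n - 1)"
    by (rule sum.lessThan_Suc[of _ "n - 1", folded n1])
  also have "of_int (W $$ (Suc i, n - 1)) * x $ (n - 1)
      = (\<Sum>k<n - 1. of_int (W $$ (Suc i,k)) * (of_int (c k) * x $ (n - 1)))"
  proof -
    have col: "of_int (W $$ (Suc i, n - 1)) = (\<Sum>k<n - 1. of_int (c k) * of_int (W $$ (Suc i,k)) :: rat)"
      using last i by simp
    show ?thesis
      unfolding col sum_distrib_right by (intro sum.cong refl) (simp add: ac_simps)
  qed
  also have "(\<Sum>k<n - 1. of_int (W $$ (Suc i,k)) * x $ k) + \<dots>
      = (\<Sum>k<n - 1. of_int (W $$ (Suc i,k)) * x $ k + of_int (W $$ (Suc i,k)) * (of_int (c k) * x $ (n - 1)))"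
    by (rule sum.distrib[symmetric])
  also have "\<dots> = (\<Sum>k<n - 1. of_int (W $$ (Suc i,k)) * ?z $ k)"
    by (intro sum.cong refl) (simp add: distrib_left)
  also have "\<dots> = (?H *\<^sub>v ?z) $ i"
    using W i by (simp add: walk_hat_def scalar_prod_def lessThan_atLeast0)
  finally show "?Tx $ i = (?H *\<^sub>v ?z) $ i" .
qed (simp add: walk_hat_def)

lemma drop_first_coordinate_col_space:
  fixes W :: "int mat"
  assumes W: "W \<in> carrier_mat n n" and n: "1 \<le> n"
    and last: "\<forall>i<n. W $$ (i, n - 1) = (\<Sum>j<n - 1. c j * W $$ (i,j))"
  shows "(\<lambda>v. vec (n - 1) (\<lambda>i. v $ Suc i)) ` vec_space.col_space n (map_mat of_int W)
    = vec_space.col_space (n - 1) (map_mat (of_int :: int \<Rightarrow> rat) (walk_hat n W))"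
    (is "?T ` vec_space.col_space n ?WQ = vec_space.col_space (n - 1) ?HQ")
proof -
  define z where "z x = vec (n - 1) (\<lambda>k. x $ k + of_int (c k) * x $ (n - 1))" for x :: "rat vec"
  have WQ: "?WQ \<in> carrier_mat n n" using W by simp
  have HQ: "?HQ \<in> carrier_mat (n - 1) (n - 1)" unfolding walk_hat_def by simp
  have z: "z ` carrier_vec n = carrier_vec (n - 1)"
  proof (intro equalityI subsetI)
    fix v :: "rat vec" assume v: "v \<in> carrier_vec (n - 1)"
    define x where "x = vec n (\<lambda>k. if k < n - 1 then v $ k else 0)"
    have "z x = v" unfolding z_def x_def using v n by (intro eq_vecI) auto
    moreover have "x \<in> carrier_vec n" unfolding x_def by simp
    ultimately show "v \<in> z ` carrier_vec n" by blast
  qed (auto simp: z_def)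
  have "?T ` (\<lambda>x. ?WQ *\<^sub>v x) ` carrier_vec n = (\<lambda>x. ?HQ *\<^sub>v x) ` z ` carrier_vec n"
    unfolding image_image using drop_first_coordinate_mult_vec[OF W n _ last]
    by (intro image_cong) (simp_all add: z_def)
  then have "?T ` (\<lambda>x. ?WQ *\<^sub>v x) ` carrier_vec n = (\<lambda>x. ?HQ *\<^sub>v x) ` carrier_vec (n - 1)"
    unfolding z .
  moreover have "vec_space.col_space n ?WQ = (\<lambda>x. ?WQ *\<^sub>v x) ` carrier_vec n"
    using vec_space.col_space_eq[OF WQ] WQ by auto
  moreover have "vec_space.col_space (n - 1) ?HQ = (\<lambda>x. ?HQ *\<^sub>v x) ` carrier_vec (n - 1)"
    using vec_space.col_space_eq[OF HQ] HQ by auto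
  ultimately show ?thesis by simp
qed

lemma rank_walk_hat:
  fixes W :: "int mat"
  assumes W: "W \<in> carrier_mat n n" and n: "2 \<le> n"
    and rows: "\<forall>j<n. W $$ (0,j) = W $$ (1,j)"
    and last: "\<forall>i<n. W $$ (i, n - 1) = (\<Sum>j<n - 1. c j * W $$ (i,j))"
  shows "vec_space.rank n (map_mat (of_int :: int \<Rightarrow> rat) W)
    = vec_space.rank (n - 1) (map_mat (of_int :: int \<Rightarrow> rat) (walk_hat n W))"
proof (rule rank_eq_by_linear_bij_col_space)
  let ?WQ = "map_mat (of_int :: int \<Rightarrow> rat) W" and ?T = "\<lambda>v. vec (n - 1) (\<lambda>i. v $ Suc i)"
  have WQ: "?WQ \<in> carrier_mat n n" using W by simp
  have "(?WQ *\<^sub>v x) $ 0 = (?WQ *\<^sub>v x) $ 1" if "x \<in> carrier_vec n" for x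
    using that W rows n by (auto simp: scalar_prod_def intro!: sum.cong)
  then have "vec_space.col_space n ?WQ \<subseteq> {v \<in> carrier_vec n. v $ 0 = v $ 1}"
    using vec_space.col_space_eq[OF WQ] WQ by auto
  then have "inj_on ?T (vec_space.col_space n ?WQ)"
    by (rule inj_on_subset[OF inj_on_drop_first_coordinate[OF n]])
  moreover have "?T ` vec_space.col_space n ?WQ
      = vec_space.col_space (n - 1) (map_mat of_int (walk_hat n W))"
    by (rule drop_first_coordinate_col_space[OF W _ last]) (use n in simp)
  ultimately show "bij_betw ?T (vec_space.col_space n ?WQ)
      (vec_space.col_space (n - 1) (map_mat of_int (walk_hat n W)))"
    unfolding bij_betw_def by blast
qed (use W in \<open>auto simp: walk_hat_def\<close>)

theorem lemma4p4:
  fixes n :: nat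
  assumes "n \<ge> 4"
  shows "(\<exists>D. is_smith_normal_form_of n (walk_mat n (Dn_adj n)) D \<and>
              is_smith_normal_form_of n (pad_hat n (walk_hat n (walk_mat n (Dn_adj n)))) D)
       \<and> vec_space.rank n (map_mat (of_int :: int \<Rightarrow> rat) (walk_mat n (Dn_adj n)))
         = vec_space.rank (n - 1) (map_mat (of_int :: int \<Rightarrow> rat) (walk_hat n (walk_mat n (Dn_adj n))))"
proof -
  let ?W = "walk_mat n (Dn_adj n)"
  have W: "?W \<in> carrier_mat n n" by (simp add: walk_mat_def)
  have n: "2 \<le> n" using assms by simp
  have rows: "\<forall>j<n. ?W $$ (0,j) = ?W $$ (1,j)"
    using walk_mat_Dn_adj_row_0_1[OF assms] by simp
  obtain c where last: "\<forall>i<n. ?W $$ (i, n - 1) = (\<Sum>j<n - 1. c j * ?W $$ (i,j))"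
    using walk_mat_Dn_adj_last_col[OF assms] by blast
  have equiv: "equivalent_mat n ?W (pad_hat n (walk_hat n ?W))"
    by (rule equivalent_mat_pad_hat[OF W n rows last])
  obtain D where "is_smith_normal_form_of n (pad_hat n (walk_hat n ?W)) D"
    using smith_normal_form_exists[OF equivalent_mat_carrier[OF equiv]] by blast
  moreover from this have "is_smith_normal_form_of n ?W D"
    by (rule is_smith_normal_form_of_equivalent[OF equiv])
  ultimately show ?thesis using rank_walk_hat[OF W n rows last] by (intro conjI exI[of _ D]) simp_all
qed

end
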